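(* Let $L$ be a precompact Hausdorff co-Heyting algebra. Then the set $\mathcal I^{!\vee}(L)$ of completely join irreducible elements and the set $\mathcal I^{!\wedge}(L)$ of completely meet irreducible elements generate the same co-Heyting subalgebra of $L$ (substructure for $0,1,\vee,\wedge,-$), and this subalgebra is the smallest co-Heyting subalgebra of $L$ that is dense in $L$ for the codimetric topology.
   Context: A co-Heyting algebra is a bounded distributive lattice $(L,0,1,\vee,\wedge)$ such that $a-b=\min\{c\in L: a\le b\vee c\}$ exists for all $a,b$. Let $a\triangle b=(a-b)\vee(b-a)$; for an ideal $I$, $L/I$ is the quotient by $a\equiv_I b\iff a\triangle b\in I$. $\operatorname{Spec}L$ is the set of prime filters ordered by inclusion; height = foundation rank there; $\operatorname{codim}_La=\min\{\operatorname{height}\mathfrak p: a\in\mathfrak p\}$ ($+\infty$ if none); $dL=\{a:\operatorname{codim}_La\ge d\}$. The codimetric pseudometric is $\operatorname{dist}_L(a,b)=2^{-\operatorname{codim}_L(a\triangle b)}$ if finite, $0$ otherwise; the codimetric topology is the one it defines. $L$ is Hausdorff if every nonzero element has finite codimension; precompact if $L/dL$ is finite for every positive integer $d$. $x\ne0$ is completely join irreducible if $x\le\bigvee A$ implies $x\le a$ for some $a\in A$; $x\ne1$ is completely meet irreducible if $\bigwedge A\le x$ implies $a\le x$ for some $a\in A$. *)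

theory Defs
  imports "HOL-Library.Extended_Nat"
begin

class coheyting = distrib_lattice + bounded_lattice +
  assumes ex_coheyting_diff:
    "\<exists>c. a \<le> sup b c \<and> (\<forall>c'. a \<le> sup b c' \<longrightarrow> c \<le> c')"

definition cdiff :: "'a::coheyting \<Rightarrow> 'a \<Rightarrow> 'a" where
  "cdiff a b = (LEAST c. a \<le> sup b c)"

definition symdiff :: "'a::coheyting \<Rightarrow> 'a \<Rightarrow> 'a" where
  "symdiff a b = sup (cdiff a b) (cdiff b a)"

definition prime_filter :: "'a::coheyting set \<Rightarrow> bool" where
  "prime_filter F \<longleftrightarrow>
     top \<in> F \<and> bot \<notin> F \<and>
     (\<forall>a b. a \<in> F \<and> a \<le> b \<longrightarrow> b \<in> F) \<and>
     (\<forall>a b. a \<in> F \<and> b \<in> F \<longrightarrow> inf a b \<in> F) \<and>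
     (\<forall>a b. sup a b \<in> F \<longrightarrow> a \<in> F \<or> b \<in> F)"

text \<open>Finite levels of the foundation rank on (Spec L, subset):
  rank_ge n p holds iff the foundation rank of p is at least n
  (with rank = infinity for points that are not in the well-founded part).\<close>

inductive rank_ge :: "nat \<Rightarrow> 'a::coheyting set \<Rightarrow> bool" where
  rank_ge_0: "prime_filter p \<Longrightarrow> rank_ge 0 p"
| rank_ge_Suc: "rank_ge n q \<Longrightarrow> prime_filter p \<Longrightarrow> q \<subset> p \<Longrightarrow> rank_ge (Suc n) p"

definition height :: "'a::coheyting set \<Rightarrow> enat" where
  "height p = Sup {enat n | n. rank_ge n p}"

definition codim :: "'a::coheyting \<Rightarrow> enat" where
  "codim a = Inf {height p | p. prime_filter p \<and> a \<in> p}"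

definition codim_ideal :: "nat \<Rightarrow> 'a::coheyting set" where
  "codim_ideal d = {a. enat d \<le> codim a}"

definition quot_rel :: "'a::coheyting set \<Rightarrow> ('a \<times> 'a) set" where
  "quot_rel I = {(a, b). symdiff a b \<in> I}"

definition cdist :: "'a::coheyting \<Rightarrow> 'a \<Rightarrow> real" where
  "cdist a b = (case codim (symdiff a b) of enat n \<Rightarrow> inverse (2 ^ n) | \<infinity> \<Rightarrow> 0)"

definition codim_open :: "'a::coheyting set \<Rightarrow> bool" where
  "codim_open U \<longleftrightarrow> (\<forall>x\<in>U. \<exists>e>0. \<forall>y. cdist x y < e \<longrightarrow> y \<in> U)"

definition codim_dense :: "'a::coheyting set \<Rightarrow> bool" where
  "codim_dense S \<longleftrightarrow> (\<forall>U. codim_open U \<and> U \<noteq> {} \<longrightarrow> U \<inter> S \<noteq> {})"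

definition hausdorff :: "'a::coheyting itself \<Rightarrow> bool" where
  "hausdorff _ \<longleftrightarrow> (\<forall>a::'a. a \<noteq> bot \<longrightarrow> codim a \<noteq> \<infinity>)"

definition precompact :: "'a::coheyting itself \<Rightarrow> bool" where
  "precompact _ \<longleftrightarrow>
     (\<forall>d::nat. 0 < d \<longrightarrow> finite ((UNIV::'a set) // quot_rel (codim_ideal d)))"

definition coheyting_subalg :: "'a::coheyting set \<Rightarrow> bool" where
  "coheyting_subalg S \<longleftrightarrow> bot \<in> S \<and> top \<in> S \<and>
     (\<forall>a\<in>S. \<forall>b\<in>S. sup a b \<in> S \<and> inf a b \<in> S \<and> cdiff a b \<in> S)"

definition gen_subalg :: "'a::coheyting set \<Rightarrow> 'a set" where
  "gen_subalg X = \<Inter>{S. coheyting_subalg S \<and> X \<subseteq> S}"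

definition is_lub :: "'a::order set \<Rightarrow> 'a \<Rightarrow> bool" where
  "is_lub A s \<longleftrightarrow> (\<forall>a\<in>A. a \<le> s) \<and> (\<forall>u. (\<forall>a\<in>A. a \<le> u) \<longrightarrow> s \<le> u)"

definition is_glb :: "'a::order set \<Rightarrow> 'a \<Rightarrow> bool" where
  "is_glb A s \<longleftrightarrow> (\<forall>a\<in>A. s \<le> a) \<and> (\<forall>u. (\<forall>a\<in>A. u \<le> a) \<longrightarrow> u \<le> s)"

definition compl_join_irred :: "'a::coheyting set" where
  "compl_join_irred = {x. x \<noteq> bot \<and>
     (\<forall>A s. is_lub A s \<and> x \<le> s \<longrightarrow> (\<exists>a\<in>A. x \<le> a))}"

definition compl_meet_irred :: "'a::coheyting set" where
  "compl_meet_irred = {x. x \<noteq> top \<and>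
     (\<forall>A s. is_glb A s \<and> s \<le> x \<longrightarrow> (\<exists>a\<in>A. a \<le> x))}"

end

theory Submission
  imports Defs
begin

(*
  In a precompact Hausdorff co-Heyting algebra every prime filter p of finite height has a
  least element x_p and a greatest element k_p outside it. The Hausdorff property lets one
  compare elements through their membership in prime filters of finite height, and
  precompactness makes the prime filters of height below any bound finitely many: k_p is
  then a finite join separating p from the prime filters of height < height p + 2 not
  contained in p, and x_p = t - k_p for a finite meet t lying in p but in no smaller prime
  filter. The x_p are exactly the completely join irreducible elements, the k_p exactly
  the completely meet irreducible ones.

  Since k_p is determined by its membership in the prime filters of height < height p + 2,
  which is an open condition for the codimetric topology, k_p lies in every dense set; so a
  dense subalgebra contains all k_p and, as differences, all x_p. The same argument puts
  every x_p into the subalgebra generated by the k_p. Conversely, an element is approximated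
  up to codimension d by the join of the x_p over the finitely many p of height < d
  containing it, so the subalgebra generated by the x_p is dense.
*)

lemma cdiff_le_iff: "cdiff a b \<le> c \<longleftrightarrow> (a::'a::coheyting) \<le> sup b c"
proof -
  obtain m where m: "a \<le> sup b m" "\<forall>c. a \<le> sup b c \<longrightarrow> m \<le> c"
    using ex_coheyting_diff by blast
  then have "cdiff a b = m"
    unfolding cdiff_def by (intro Least_equality) auto
  then show ?thesis
    using m by (metis order_trans sup.mono order_refl)
qed

lemma le_sup_cdiff: "(a::'a::coheyting) \<le> sup b (cdiff a b)"
  using cdiff_le_iff by blast

lemma cdiff_eq_bot_iff: "cdiff a b = bot \<longleftrightarrow> (a::'a::coheyting) \<le> b"
  using cdiff_le_iff[of a b bot] by (simp add: bot_unique)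

lemma prime_filter_up: "prime_filter F \<Longrightarrow> a \<in> F \<Longrightarrow> a \<le> b \<Longrightarrow> b \<in> F"
  unfolding prime_filter_def by blast

lemma prime_filter_top: "prime_filter F \<Longrightarrow> top \<in> F"
  unfolding prime_filter_def by blast

lemma prime_filter_bot: "prime_filter F \<Longrightarrow> bot \<notin> F"
  unfolding prime_filter_def by blast

lemma prime_filter_inf_iff: "prime_filter F \<Longrightarrow> inf a b \<in> F \<longleftrightarrow> a \<in> F \<and> b \<in> F"
  unfolding prime_filter_def by (meson inf.cobounded1 inf.cobounded2)

lemma prime_filter_sup_iff: "prime_filter F \<Longrightarrow> sup a b \<in> F \<longleftrightarrow> a \<in> F \<or> b \<in> F"
  unfolding prime_filter_def by (meson sup.cobounded1 sup.cobounded2)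

lemma prime_filter_cdiff: "prime_filter F \<Longrightarrow> a \<in> F \<Longrightarrow> b \<notin> F \<Longrightarrow> cdiff a b \<in> F"
  by (meson le_sup_cdiff prime_filter_sup_iff prime_filter_up)

lemma prime_filter_symdiff_iff:
  "prime_filter F \<Longrightarrow> symdiff a b \<in> F \<longleftrightarrow> cdiff a b \<in> F \<or> cdiff b a \<in> F"
  unfolding symdiff_def by (rule prime_filter_sup_iff)

lemma prime_filter_symdiff:
  "prime_filter F \<Longrightarrow> \<not> (a \<in> F \<longleftrightarrow> b \<in> F) \<Longrightarrow> symdiff a b \<in> F"
  using prime_filter_cdiff prime_filter_symdiff_iff by blast

section \<open>The prime filter theorem\<close>

definition lattice_filter :: "'a::lattice set \<Rightarrow> bool" where
  "lattice_filter F \<longleftrightarrow> (\<forall>x y. x \<in> F \<longrightarrow> x \<le> y \<longrightarrow> y \<in> F) \<and> (\<forall>x\<in>F. \<forall>y\<in>F. inf x y \<in> F)"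

lemma lattice_filter_principal: "lattice_filter {c. a \<le> c}"
  unfolding lattice_filter_def using order_trans by auto

lemma lattice_filter_Union_chain:
  assumes filters: "\<And>F. F \<in> C \<Longrightarrow> lattice_filter F"
    and comparable: "\<And>F G. F \<in> C \<Longrightarrow> G \<in> C \<Longrightarrow> F \<subseteq> G \<or> G \<subseteq> F"
  shows "lattice_filter (\<Union>C)"
  unfolding lattice_filter_def
proof (intro conjI allI impI ballI)
  fix x y assume "x \<in> \<Union>C" "x \<le> y"
  then show "y \<in> \<Union>C"
    using filters unfolding lattice_filter_def by blast
next
  fix x y assume "x \<in> \<Union>C" "y \<in> \<Union>C"
  then obtain F G where FG: "F \<in> C" "G \<in> C" "x \<in> F" "y \<in> G"
    by blast
  then obtain H where "H \<in> C" "x \<in> H" "y \<in> H"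
    using comparable[OF FG(1,2)] by blast
  then show "inf x y \<in> \<Union>C"
    using filters unfolding lattice_filter_def by blast
qed

lemma lattice_filter_adjoin:
  assumes "lattice_filter M"
  shows "lattice_filter {c. \<exists>m\<in>M. inf m u \<le> c}"
  unfolding lattice_filter_def
proof (intro conjI allI impI ballI)
  fix x y assume "x \<in> {c. \<exists>m\<in>M. inf m u \<le> c}" "x \<le> y"
  then show "y \<in> {c. \<exists>m\<in>M. inf m u \<le> c}"
    using order_trans by blast
next
  fix x y assume "x \<in> {c. \<exists>m\<in>M. inf m u \<le> c}" "y \<in> {c. \<exists>m\<in>M. inf m u \<le> c}"
  then obtain m m' where "m \<in> M" "m' \<in> M" and x: "inf m u \<le> x" and y: "inf m' u \<le> y"
    by blast
  then have "inf m m' \<in> M"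
    using assms unfolding lattice_filter_def by blast
  moreover have "inf (inf m m') u \<le> inf m u" "inf (inf m m') u \<le> inf m' u"
    by (intro inf_mono; simp)+
  then have "inf (inf m m') u \<le> inf x y"
    using le_infI order_trans x y by metis
  ultimately show "inf x y \<in> {c. \<exists>m\<in>M. inf m u \<le> c}"
    by blast
qed

lemma maximal_filter_avoiding_ideal_prime:
  fixes M J :: "'a::coheyting set"
  assumes M: "lattice_filter M" "a \<in> M" "M \<inter> J = {}"
    and M_max: "\<And>X. lattice_filter X \<Longrightarrow> a \<in> X \<Longrightarrow> X \<inter> J = {} \<Longrightarrow> M \<subseteq> X \<Longrightarrow> X = M"
    and J_down: "\<And>c c'. c \<in> J \<Longrightarrow> c' \<le> c \<Longrightarrow> c' \<in> J"
    and J_sup: "\<And>c c'. c \<in> J \<Longrightarrow> c' \<in> J \<Longrightarrow> sup c c' \<in> J"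
    and bot_J: "bot \<in> J"
  shows "prime_filter M"
proof -
  have M_up: "\<And>x y. x \<in> M \<Longrightarrow> x \<le> y \<Longrightarrow> y \<in> M"
    and M_inf: "\<And>x y. x \<in> M \<Longrightarrow> y \<in> M \<Longrightarrow> inf x y \<in> M"
    using M(1) unfolding lattice_filter_def by blast+
  have meets_J: "\<exists>m\<in>M. inf m u \<in> J" if "u \<notin> M" for u
  proof (rule ccontr)
    assume "\<not> (\<exists>m\<in>M. inf m u \<in> J)"
    then have "{c. \<exists>m\<in>M. inf m u \<le> c} \<inter> J = {}"
      using J_down by blast
    moreover have "a \<in> {c. \<exists>m\<in>M. inf m u \<le> c}" "M \<subseteq> {c. \<exists>m\<in>M. inf m u \<le> c}"
      "u \<in> {c. \<exists>m\<in>M. inf m u \<le> c}"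
      using M(2) inf_le1 inf_le2 by blast+
    ultimately show False
      using M_max[OF lattice_filter_adjoin[OF M(1)]] that by blast
  qed
  show "prime_filter M"
    unfolding prime_filter_def
  proof (intro conjI allI impI)
    show "top \<in> M" using M_up[OF M(2) top_greatest] .
    show "bot \<notin> M" using M(3) bot_J by blast
  next
    fix u v assume uv: "sup u v \<in> M"
    show "u \<in> M \<or> v \<in> M"
    proof (rule ccontr)
      assume "\<not> (u \<in> M \<or> v \<in> M)"
      then obtain m1 m2 where m: "m1 \<in> M" "inf m1 u \<in> J" "m2 \<in> M" "inf m2 v \<in> J"
        using meets_J by blast
      have "inf (inf m1 m2) (sup u v) \<in> M"
        using m uv M_inf by blast
      moreover have "inf (inf m1 m2) (sup u v) \<le> sup (inf m1 u) (inf m2 v)"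
        by (simp add: inf_sup_distrib1 le_infI1 le_infI2 sup.coboundedI1 sup.coboundedI2)
      ultimately show False
        using J_down J_sup m M(3) by blast
    qed
  qed (use M_up M_inf in blast)+
qed

lemma ex_prime_filter_avoiding_ideal:
  fixes a :: "'a::coheyting" and J :: "'a set"
  assumes J_down: "\<And>c c'. c \<in> J \<Longrightarrow> c' \<le> c \<Longrightarrow> c' \<in> J"
    and J_sup: "\<And>c c'. c \<in> J \<Longrightarrow> c' \<in> J \<Longrightarrow> sup c c' \<in> J"
    and bot_J: "bot \<in> J" and a_J: "a \<notin> J"
  shows "\<exists>P. prime_filter P \<and> a \<in> P \<and> P \<inter> J = {}"
proof -
  define S where "S = {F. lattice_filter F \<and> a \<in> F \<and> F \<inter> J = {}}"
  have "\<exists>M\<in>S. \<forall>X\<in>S. M \<subseteq> X \<longrightarrow> X = M"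
  proof (rule Zorn_Lemma2, intro ballI)
    fix C assume C: "C \<in> chains S"
    show "\<exists>U\<in>S. \<forall>X\<in>C. X \<subseteq> U"
    proof (cases "C = {}")
      case True
      have "{c. a \<le> c} \<in> S"
        unfolding S_def using lattice_filter_principal J_down a_J by blast
      then show ?thesis using True by blast
    next
      case False
      have CS: "C \<subseteq> S" and comparable: "\<And>F G. F \<in> C \<Longrightarrow> G \<in> C \<Longrightarrow> F \<subseteq> G \<or> G \<subseteq> F"
        using C unfolding chains_def chain_subset_def by auto
      have "lattice_filter (\<Union>C)"
      proof (rule lattice_filter_Union_chain)
        show "lattice_filter F" if "F \<in> C" for F
          using that CS unfolding S_def by blast
      qed (fact comparable)
      moreover have "a \<in> \<Union>C" "\<Union>C \<inter> J = {}"
        using False CS unfolding S_def by blast+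
      ultimately have "\<Union>C \<in> S"
        unfolding S_def by blast
      then show ?thesis by blast
    qed
  qed
  then obtain M where M: "lattice_filter M" "a \<in> M" "M \<inter> J = {}"
    and M_max: "\<forall>X\<in>S. M \<subseteq> X \<longrightarrow> X = M"
    unfolding S_def by blast
  have "prime_filter M"
  proof (rule maximal_filter_avoiding_ideal_prime[OF M])
    show "X = M" if "lattice_filter X" "a \<in> X" "X \<inter> J = {}" "M \<subseteq> X" for X
      using that M_max unfolding S_def by blast
  qed (fact J_down J_sup bot_J)+
  then show ?thesis using M by blast
qed

lemma prime_filter_separation:
  fixes a b :: "'a::coheyting"
  assumes p: "prime_filter p" and "cdiff a b \<in> p"
  shows "\<exists>q. prime_filter q \<and> q \<subseteq> p \<and> a \<in> q \<and> b \<notin> q"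
proof -
  \<comment> \<open>the ideal generated by \<open>b\<close> and the complement of \<open>p\<close>; it misses \<open>a\<close> because \<open>a - b \<in> p\<close>\<close>
  define J where "J = {c. \<exists>e. e \<notin> p \<and> c \<le> sup b e}"
  have "\<exists>P. prime_filter P \<and> a \<in> P \<and> P \<inter> J = {}"
  proof (rule ex_prime_filter_avoiding_ideal)
    show "c' \<in> J" if "c \<in> J" "c' \<le> c" for c c'
      using that order_trans unfolding J_def by blast
    show "sup c c' \<in> J" if cc': "c \<in> J" "c' \<in> J" for c c'
    proof -
      obtain e e' where "e \<notin> p" "c \<le> sup b e" "e' \<notin> p" "c' \<le> sup b e'"
        using cc' unfolding J_def by blast
      moreover have "sup (sup b e) (sup b e') = sup b (sup e e')"
        by (simp add: sup_aci)
      ultimately have "sup e e' \<notin> p" "sup c c' \<le> sup b (sup e e')"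
        using prime_filter_sup_iff[OF p] sup_mono by metis+
      then show ?thesis unfolding J_def by blast
    qed
    show "bot \<in> J" unfolding J_def using prime_filter_bot[OF p] by auto
    show "a \<notin> J"
    proof
      assume "a \<in> J"
      then obtain e where "e \<notin> p" "cdiff a b \<le> e"
        unfolding J_def cdiff_le_iff by blast
      then show False
        using assms prime_filter_up by blast
    qed
  qed
  moreover have "c \<in> J" if "c \<notin> p" for c
    unfolding J_def using that by auto
  moreover have "b \<in> J"
    unfolding J_def using prime_filter_bot[OF p] by (auto intro: exI[of _ bot])
  ultimately show ?thesis by blast
qed

lemma rank_ge_prime_filter: "rank_ge n p \<Longrightarrow> prime_filter p"
  by (induction rule: rank_ge.induct) auto

lemma rank_ge_SucD: "rank_ge (Suc n) p \<Longrightarrow> rank_ge n p"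
proof (induction n arbitrary: p)
  case 0
  then show ?case using rank_ge_prime_filter rank_ge_0 by blast
next
  case (Suc n)
  from Suc.prems obtain q where "rank_ge (Suc n) q" "prime_filter p" "q \<subset> p"
    by (cases rule: rank_ge.cases) auto
  then show ?case using Suc.IH rank_ge_Suc by blast
qed

lemma rank_ge_le: "m \<le> n \<Longrightarrow> rank_ge n p \<Longrightarrow> rank_ge m p"
  by (induction n) (auto dest: rank_ge_SucD simp: le_Suc_eq)

lemma rank_ge_superset:
  assumes "rank_ge n q" "q \<subseteq> p" "prime_filter p"
  shows "rank_ge n p"
proof (cases "q = p")
  case False
  then have "rank_ge (Suc n) p" using assms rank_ge_Suc by blast
  then show ?thesis by (rule rank_ge_SucD)
qed (use assms in simp)

lemma rank_ge_iff_height: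
  assumes p: "prime_filter p"
  shows "rank_ge n p \<longleftrightarrow> enat n \<le> height p"
proof
  assume "rank_ge n p"
  then show "enat n \<le> height p"
    unfolding height_def by (auto intro: Sup_upper)
next
  assume h: "enat n \<le> height p"
  show "rank_ge n p"
  proof (rule ccontr)
    assume not_n: "\<not> rank_ge n p"
    then have "n > 0" using p rank_ge_0 by (cases n) auto
    have "m < n" if "rank_ge m p" for m
      using not_n rank_ge_le[of n m p] that by (cases "n \<le> m") auto
    then have "height p \<le> enat (n - 1)"
      unfolding height_def by (intro Sup_least) fastforce
    then show False using h \<open>n > 0\<close> by (cases "height p") auto
  qed
qed

lemma height_mono: "q \<subseteq> p \<Longrightarrow> prime_filter p \<Longrightarrow> height q \<le> height p"
  unfolding height_def by (rule Sup_subset_mono) (blast intro: rank_ge_superset)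

lemma height_less:
  assumes "q \<subset> p" "prime_filter q" "prime_filter p" "height p = enat h"
  shows "\<exists>m. height q = enat m \<and> m < h"
proof -
  have "height q \<le> enat h" using height_mono assms by (metis less_imp_le)
  then obtain m where m: "height q = enat m" using enat_ile by blast
  then have "rank_ge (Suc m) p"
    using rank_ge_iff_height[OF assms(2), of m] assms rank_ge_Suc by simp
  then show ?thesis using m rank_ge_iff_height[OF assms(3), of "Suc m"] assms(4) by simp
qed

lemma ex_prime_filter_of_height:
  "prime_filter p \<Longrightarrow> height p = enat h \<Longrightarrow> m \<le> h
    \<Longrightarrow> \<exists>q. prime_filter q \<and> q \<subseteq> p \<and> height q = enat m"
proof (induction h arbitrary: p)
  case (Suc h)
  show ?case
  proof (cases "m = Suc h")
    case False
    then have "m \<le> h" using Suc.prems by simp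
    have "rank_ge (Suc h) p" using rank_ge_iff_height[OF Suc.prems(1)] Suc.prems(2) by simp
    then obtain q where q: "rank_ge h q" "q \<subset> p"
      by (cases rule: rank_ge.cases) auto
    have "prime_filter q" using q rank_ge_prime_filter by blast
    moreover obtain k where "height q = enat k" "k < Suc h"
      using height_less[OF q(2) \<open>prime_filter q\<close> Suc.prems(1,2)] by blast
    moreover have "enat h \<le> height q" using q(1) rank_ge_iff_height[OF \<open>prime_filter q\<close>] by blast
    ultimately have "height q = enat h" by simp
    then show ?thesis using Suc.IH[OF \<open>prime_filter q\<close> _ \<open>m \<le> h\<close>] q(2) by blast
  qed (use Suc.prems in auto)
qed auto

lemma codim_le_height: "prime_filter q \<Longrightarrow> c \<in> q \<Longrightarrow> codim c \<le> height q"
  unfolding codim_def by (rule Inf_lower) blast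

lemma codim_attained:
  assumes "codim c \<noteq> \<infinity>"
  shows "\<exists>q. prime_filter q \<and> c \<in> q \<and> height q = codim c"
proof -
  let ?H = "{height p | p. prime_filter p \<and> c \<in> p}"
  have "?H \<noteq> {}"
  proof
    assume "?H = {}"
    then show False using assms unfolding codim_def by (simp add: Inf_enat_def)
  qed
  then have "Inf ?H \<in> ?H" unfolding Inf_enat_def by (auto intro: LeastI)
  then show ?thesis unfolding codim_def by auto
qed

section \<open>The codimetric topology\<close>

lemma hausdorff_le_if_prime_filters:
  fixes a b :: "'a::coheyting"
  assumes "hausdorff TYPE('a)"
    and "\<And>q. prime_filter q \<Longrightarrow> height q \<noteq> \<infinity> \<Longrightarrow> a \<in> q \<Longrightarrow> b \<in> q"
  shows "a \<le> b"
proof (rule ccontr)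
  assume "\<not> a \<le> b"
  then have "codim (cdiff a b) \<noteq> \<infinity>"
    using assms(1) cdiff_eq_bot_iff unfolding hausdorff_def by blast
  then obtain p where p: "prime_filter p" "cdiff a b \<in> p" "height p \<noteq> \<infinity>"
    using codim_attained by fastforce
  obtain q where q: "prime_filter q" "q \<subseteq> p" "a \<in> q" "b \<notin> q"
    using prime_filter_separation[OF p(1,2)] by blast
  obtain i where "height p = enat i"
    using p(3) by auto
  then have "height q \<noteq> \<infinity>"
    using height_mono[OF q(2) p(1)] enat_ile by fastforce
  then show False using assms(2) q by blast
qed

text \<open>By \<open>codim_symdiff_ge_iff\<close> and \<open>cdist_le_iff\<close>, \<open>agree_below k a b\<close> means
  \<open>cdist a b \<le> 2 ^ - k\<close>.\<close>

definition agree_below :: "nat \<Rightarrow> 'a::coheyting \<Rightarrow> 'a \<Rightarrow> bool" where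
  "agree_below k a b \<longleftrightarrow>
     (\<forall>q. prime_filter q \<and> height q < enat k \<longrightarrow> (a \<in> q \<longleftrightarrow> b \<in> q))"

lemma codim_symdiff_ge_iff:
  fixes a b :: "'a::coheyting"
  shows "enat k \<le> codim (symdiff a b) \<longleftrightarrow> agree_below k a b"
proof
  assume k: "enat k \<le> codim (symdiff a b)"
  show "agree_below k a b"
    unfolding agree_below_def
  proof (intro allI impI)
    fix q :: "'a set" assume q: "prime_filter q \<and> height q < enat k"
    show "a \<in> q \<longleftrightarrow> b \<in> q"
    proof (rule ccontr)
      assume "\<not> (a \<in> q \<longleftrightarrow> b \<in> q)"
      then have "codim (symdiff a b) \<le> height q"
        using q codim_le_height prime_filter_symdiff by blast
      then show False using q k by (meson leD order.trans)
    qed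
  qed
next
  assume agree: "agree_below k a b"
  show "enat k \<le> codim (symdiff a b)"
    unfolding codim_def
  proof (rule Inf_greatest, clarify)
    fix p assume p: "prime_filter p" "symdiff a b \<in> p"
    have "\<exists>q::'a set. prime_filter q \<and> q \<subseteq> p \<and> \<not> (a \<in> q \<longleftrightarrow> b \<in> q)"
    proof (cases "cdiff a b \<in> p")
      case True
      then show ?thesis using prime_filter_separation[OF p(1)] by blast
    next
      case False
      then have "cdiff b a \<in> p" using p prime_filter_symdiff_iff by blast
      then show ?thesis using prime_filter_separation[OF p(1)] by blast
    qed
    then obtain q where "prime_filter q" "q \<subseteq> p" "\<not> (a \<in> q \<longleftrightarrow> b \<in> q)"
      by blast
    then have "\<not> height q < enat k"
      using agree unfolding agree_below_def by blast
    then show "enat k \<le> height p"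
      using height_mono[OF \<open>q \<subseteq> p\<close> p(1)] by simp
  qed
qed

lemma cdist_le_iff: "cdist a b \<le> inverse (2 ^ k) \<longleftrightarrow> enat k \<le> codim (symdiff a b)"
proof (cases "codim (symdiff a b)")
  case (enat m)
  have "inverse (2 ^ m :: real) \<le> inverse (2 ^ k) \<longleftrightarrow> k \<le> m"
    by (simp add: power_increasing_iff)
  then show ?thesis using enat by (simp add: cdist_def)
qed (simp add: cdist_def)

lemma finite_prime_filters_height_less:
  assumes "precompact TYPE('a::coheyting)"
  shows "finite {q::'a set. prime_filter q \<and> height q < enat k}"
proof (cases "k = 0")
  case False
  let ?R = "quot_rel (codim_ideal k :: 'a set)"
  let ?P = "{q::'a set. prime_filter q \<and> height q < enat k}"
  have R_iff: "(a, b) \<in> ?R \<longleftrightarrow> agree_below k a b" for a b :: 'a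
    unfolding quot_rel_def codim_ideal_def by (simp add: codim_symdiff_ge_iff)
  \<comment> \<open>each such prime filter is a union of classes of the finite quotient by \<open>?R\<close>\<close>
  define classes where "classes q = {C \<in> UNIV // ?R. C \<subseteq> q}" for q :: "'a set"
  have q_classes: "q = \<Union>(classes q)" if "q \<in> ?P" for q
  proof
    show "\<Union>(classes q) \<subseteq> q"
      unfolding classes_def by blast
    show "q \<subseteq> \<Union>(classes q)"
    proof
      fix a assume "a \<in> q"
      then have "?R `` {a} \<subseteq> q"
        using \<open>q \<in> ?P\<close> R_iff unfolding agree_below_def by blast
      moreover have "a \<in> ?R `` {a}"
        using R_iff[of a a] unfolding agree_below_def by simp
      moreover have "?R `` {a} \<in> UNIV // ?R"
        by (rule quotientI) simp
      ultimately show "a \<in> \<Union>(classes q)"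
        unfolding classes_def by blast
    qed
  qed
  have "inj_on classes ?P"
    by (rule inj_onI) (metis q_classes)
  moreover have "classes ` ?P \<subseteq> Pow (UNIV // ?R)"
    unfolding classes_def by blast
  then have "finite (classes ` ?P)"
    using assms False finite_subset unfolding precompact_def by blast
  ultimately show ?thesis
    using finite_imageD by blast
qed (simp add: zero_enat_def[symmetric])

lemma codim_dense_iff_agree_below:
  "codim_dense T \<longleftrightarrow> (\<forall>(a::'a::coheyting) k. \<exists>t\<in>T. agree_below k a t)"
proof
  assume dense: "codim_dense T"
  show "\<forall>a k. \<exists>t\<in>T. agree_below k a t"
  proof (intro allI)
    fix a :: 'a and k
    have "codim_open {y. agree_below k a y}"
      unfolding codim_open_def
    proof (intro ballI exI conjI allI impI)
      fix x y assume "x \<in> {y. agree_below k a y}" "cdist x y < inverse (2 ^ k)"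
      then have "agree_below k a x" "agree_below k x y"
        using cdist_le_iff[of x y k] codim_symdiff_ge_iff by auto
      then show "y \<in> {y. agree_below k a y}"
        unfolding agree_below_def by simp
    qed simp
    moreover have "a \<in> {y. agree_below k a y}"
      unfolding agree_below_def by simp
    ultimately show "\<exists>t\<in>T. agree_below k a t"
      using dense unfolding codim_dense_def by blast
  qed
next
  assume approx: "\<forall>a k. \<exists>t\<in>T. agree_below k a t"
  show "codim_dense T"
    unfolding codim_dense_def
  proof (intro allI impI)
    fix U :: "'a set" assume "codim_open U \<and> U \<noteq> {}"
    then obtain x e where "e > 0" and ball: "\<And>y. cdist x y < e \<Longrightarrow> y \<in> U"
      unfolding codim_open_def by blast
    then obtain k where k: "inverse (2 ^ k) < e"
      using real_arch_pow_inv[of e "1/2"] by (auto simp: power_one_over inverse_eq_divide)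
    obtain t where "t \<in> T" "agree_below k x t"
      using approx by blast
    then have "cdist x t < e"
      using k cdist_le_iff codim_symdiff_ge_iff by (metis le_less_trans)
    then show "U \<inter> T \<noteq> {}"
      using ball \<open>t \<in> T\<close> by blast
  qed
qed

section \<open>Least elements and greatest non-elements of prime filters\<close>

definition is_least_in :: "'a::order set \<Rightarrow> 'a \<Rightarrow> bool" where
  "is_least_in r x \<longleftrightarrow> x \<in> r \<and> (\<forall>a\<in>r. x \<le> a)"

definition is_greatest_outside :: "'a::order set \<Rightarrow> 'a \<Rightarrow> bool" where
  "is_greatest_outside r k \<longleftrightarrow> k \<notin> r \<and> (\<forall>a. a \<notin> r \<longrightarrow> a \<le> k)"

lemma is_least_in_unique: "is_least_in r x \<Longrightarrow> is_least_in r y \<Longrightarrow> x = y"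
  unfolding is_least_in_def by (blast intro: order.antisym)

lemma is_greatest_outside_unique: "is_greatest_outside r k \<Longrightarrow> is_greatest_outside r k' \<Longrightarrow> k = k'"
  unfolding is_greatest_outside_def by (blast intro: order.antisym)

lemma is_least_in_mem_iff:
  "is_least_in r x \<Longrightarrow> prime_filter q \<Longrightarrow> x \<in> q \<longleftrightarrow> r \<subseteq> q"
  unfolding is_least_in_def using prime_filter_up by blast

lemma is_greatest_outside_mem_iff:
  "is_greatest_outside r k \<Longrightarrow> prime_filter q \<Longrightarrow> k \<in> q \<longleftrightarrow> \<not> q \<subseteq> r"
  unfolding is_greatest_outside_def using prime_filter_up by blast

lemma is_greatest_outsideI:
  fixes r :: "'a::coheyting set"
  assumes H: "hausdorff TYPE('a)" and r: "prime_filter r" "height r = enat n" and "c \<notin> r"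
    and c_mem: "\<And>q. prime_filter q \<Longrightarrow> height q < enat (n + 2) \<Longrightarrow> \<not> q \<subseteq> r \<Longrightarrow> c \<in> q"
  shows "is_greatest_outside r c"
  unfolding is_greatest_outside_def
proof (intro conjI allI impI)
  fix a assume "a \<notin> r"
  show "a \<le> c"
  proof (rule hausdorff_le_if_prime_filters[OF H])
    fix q assume q: "prime_filter q" "height q \<noteq> \<infinity>" "a \<in> q"
    with \<open>a \<notin> r\<close> have "\<not> q \<subseteq> r" by blast
    show "c \<in> q"
    proof (cases "height q < enat (n + 2)")
      case False
      then obtain h where "height q = enat h" "n + 1 \<le> h"
        using q(2) by (cases "height q") auto
      then obtain q' where q': "prime_filter q'" "q' \<subseteq> q" "height q' = enat (n + 1)"
        using ex_prime_filter_of_height[OF q(1)] by blast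
      have "\<not> q' \<subseteq> r"
        using height_mono[OF _ r(1), of q'] q'(3) r(2) by auto
      then have "c \<in> q'" using c_mem q' by simp
      then show ?thesis using q'(2) by blast
    qed (use c_mem q \<open>\<not> q \<subseteq> r\<close> in blast)
  qed
qed fact

lemma ex_mem_all_outside:
  fixes r :: "'a::coheyting set"
  assumes "finite Q" "prime_filter r" "\<And>q. q \<in> Q \<Longrightarrow> prime_filter q \<and> \<not> q \<subseteq> r"
  shows "\<exists>c. c \<notin> r \<and> (\<forall>q\<in>Q. c \<in> q)"
  using assms(1,3)
proof (induction Q rule: finite_induct)
  case empty
  then show ?case using prime_filter_bot[OF assms(2)] by blast
next
  case (insert q Q)
  then obtain c where c: "c \<notin> r" "\<forall>q\<in>Q. c \<in> q" by blast
  obtain a where a: "a \<in> q" "a \<notin> r" using insert.prems by blast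
  have "sup c a \<notin> r" using prime_filter_sup_iff[OF assms(2)] c a by blast
  moreover have "sup c a \<in> q'" if "q' \<in> insert q Q" for q'
  proof -
    have "prime_filter q'" "c \<in> q' \<or> a \<in> q'"
      using that insert.prems c(2) a(1) by auto
    then show ?thesis using prime_filter_sup_iff by blast
  qed
  ultimately show ?case by blast
qed

lemma ex_is_greatest_outside:
  fixes r :: "'a::coheyting set"
  assumes H: "hausdorff TYPE('a)" and PC: "precompact TYPE('a)"
    and r: "prime_filter r" "height r = enat n"
  shows "\<exists>k. is_greatest_outside r k"
proof -
  let ?Q = "{q::'a set. prime_filter q \<and> height q < enat (n + 2) \<and> \<not> q \<subseteq> r}"
  have "finite ?Q"
    using finite_prime_filters_height_less[OF PC, of "n + 2"] by (rule finite_subset[rotated]) blast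
  then obtain c where "c \<notin> r" "\<forall>q\<in>?Q. c \<in> q"
    using ex_mem_all_outside[of ?Q r] r(1) by blast
  then have "is_greatest_outside r c"
    using is_greatest_outsideI[OF H r] by blast
  then show ?thesis by blast
qed

text \<open>By \<open>is_greatest_outsideI\<close>, \<open>k\<close> is determined by its membership in the prime filters
  of height below \<open>n + 2\<close>; that is an open condition, so a dense set must contain \<open>k\<close> itself.\<close>

lemma is_greatest_outside_mem_dense:
  fixes r :: "'a::coheyting set"
  assumes H: "hausdorff TYPE('a)" and "codim_dense T"
    and r: "prime_filter r" "height r = enat n" and k: "is_greatest_outside r k"
  shows "k \<in> T"
proof -
  obtain t where "t \<in> T" and agree: "agree_below (n + 2) k t"
    using assms(2) codim_dense_iff_agree_below by blast
  have "k \<notin> r" using k unfolding is_greatest_outside_def by blast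
  then have "t \<notin> r"
    using agree r unfolding agree_below_def by simp
  have "is_greatest_outside r t"
  proof (rule is_greatest_outsideI[OF H r \<open>t \<notin> r\<close>])
    fix q assume "prime_filter q" "height q < enat (n + 2)" "\<not> q \<subseteq> r"
    then show "t \<in> q"
      using is_greatest_outside_mem_iff[OF k] agree unfolding agree_below_def by blast
  qed
  then show ?thesis using is_greatest_outside_unique k \<open>t \<in> T\<close> by blast
qed

lemma is_least_in_cdiff:
  fixes r :: "'a::coheyting set"
  assumes H: "hausdorff TYPE('a)" and r: "prime_filter r" and k: "is_greatest_outside r k"
    and "t \<in> r" and t_only: "\<And>q. prime_filter q \<Longrightarrow> q \<subseteq> r \<Longrightarrow> t \<in> q \<Longrightarrow> q = r"
  shows "is_least_in r (cdiff t k)"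
  unfolding is_least_in_def
proof (intro conjI ballI)
  show "cdiff t k \<in> r"
    using k prime_filter_cdiff[OF r \<open>t \<in> r\<close>] unfolding is_greatest_outside_def by blast
next
  fix a assume "a \<in> r"
  have "t \<le> sup k a"
  proof (rule hausdorff_le_if_prime_filters[OF H])
    fix q assume q: "prime_filter q" "height q \<noteq> \<infinity>" "t \<in> q"
    show "sup k a \<in> q"
    proof (cases "k \<in> q")
      case False
      then have "q = r" using is_greatest_outside_mem_iff[OF k q(1)] t_only q by blast
      then show ?thesis using \<open>a \<in> r\<close> prime_filter_sup_iff[OF q(1)] by blast
    qed (use prime_filter_sup_iff[OF q(1)] in blast)
  qed
  then show "cdiff t k \<le> a" using cdiff_le_iff by blast
qed

lemma finite_prime_filters_subset:
  fixes r :: "'a::coheyting set"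
  assumes PC: "precompact TYPE('a)" and r: "prime_filter r" "height r = enat n"
  shows "finite {q. prime_filter q \<and> q \<subseteq> r}"
proof (rule finite_subset)
  show "{q. prime_filter q \<and> q \<subseteq> r} \<subseteq> {q. prime_filter q \<and> height q < enat (n + 1)}"
  proof clarify
    fix q :: "'a set" assume "prime_filter q" "q \<subseteq> r"
    then have "height q \<le> enat n" using height_mono[OF _ r(1)] r(2) by metis
    then show "height q < enat (n + 1)" by (cases "height q") auto
  qed
qed (rule finite_prime_filters_height_less[OF PC])

lemma ex_mem_inside_avoiding:
  fixes r :: "'a::coheyting set"
  assumes "finite Q" "prime_filter r" "coheyting_subalg S"
    and "\<And>q. q \<in> Q \<Longrightarrow> prime_filter q \<and> (\<exists>a\<in>S. a \<in> r \<and> a \<notin> q)"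
  shows "\<exists>t\<in>S. t \<in> r \<and> (\<forall>q\<in>Q. t \<notin> q)"
  using assms(1,4)
proof (induction Q rule: finite_induct)
  case empty
  then show ?case
    using assms(3) prime_filter_top[OF assms(2)] unfolding coheyting_subalg_def by blast
next
  case (insert q Q)
  then obtain t where t: "t \<in> S" "t \<in> r" "\<forall>q\<in>Q. t \<notin> q" by blast
  obtain a where a: "a \<in> S" "a \<in> r" "a \<notin> q" using insert.prems by blast
  have "inf t a \<in> S" using assms(3) t(1) a(1) unfolding coheyting_subalg_def by blast
  moreover have "inf t a \<in> r" using prime_filter_inf_iff[OF assms(2)] t a by blast
  moreover have "inf t a \<notin> q'" if "q' \<in> insert q Q" for q'
  proof -
    have "prime_filter q'" "t \<notin> q' \<or> a \<notin> q'"
      using that insert.prems t(3) a(3) by auto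
    then show ?thesis using prime_filter_inf_iff by blast
  qed
  ultimately show ?case by blast
qed

lemma ex_is_least_in_subalg:
  fixes r :: "'a::coheyting set"
  assumes H: "hausdorff TYPE('a)" and PC: "precompact TYPE('a)" and S: "coheyting_subalg S"
    and r: "prime_filter r" "height r = enat n"
    and greatest_S: "\<And>q m k. prime_filter q \<Longrightarrow> height q = enat m \<Longrightarrow> is_greatest_outside q k \<Longrightarrow> k \<in> S"
  shows "\<exists>x\<in>S. is_least_in r x"
proof -
  let ?Q = "{q. prime_filter q \<and> q \<subset> r}"
  have "finite ?Q"
    using finite_prime_filters_subset[OF PC r] by (rule finite_subset[rotated]) blast
  moreover have "prime_filter q \<and> (\<exists>a\<in>S. a \<in> r \<and> a \<notin> q)" if "q \<in> ?Q" for q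
  proof -
    have q: "prime_filter q" "q \<subset> r" using that by auto
    then obtain m where m: "height q = enat m"
      using height_less[OF q(2) q(1) r] by blast
    then obtain k where k: "is_greatest_outside q k"
      using ex_is_greatest_outside[OF H PC q(1)] by blast
    then have "k \<in> S" "k \<in> r" "k \<notin> q"
      using greatest_S[OF q(1) m] is_greatest_outside_mem_iff[OF k r(1)] q(2)
        is_greatest_outside_mem_iff[OF k q(1)] by auto
    then show ?thesis using q(1) by blast
  qed
  ultimately obtain t where t: "t \<in> S" "t \<in> r" "\<forall>q\<in>?Q. t \<notin> q"
    using ex_mem_inside_avoiding[OF _ r(1) S] by blast
  obtain k where k: "is_greatest_outside r k"
    using ex_is_greatest_outside[OF H PC r] by blast
  have "is_least_in r (cdiff t k)"
    using is_least_in_cdiff[OF H r(1) k t(2)] t(3) by blast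
  moreover have "cdiff t k \<in> S"
    using S t(1) greatest_S[OF r k] unfolding coheyting_subalg_def by blast
  ultimately show ?thesis by blast
qed

lemma coheyting_subalg_UNIV: "coheyting_subalg UNIV"
  unfolding coheyting_subalg_def by blast

lemma ex_is_least_in:
  fixes r :: "'a::coheyting set"
  assumes "hausdorff TYPE('a)" "precompact TYPE('a)" "prime_filter r" "height r = enat n"
  shows "\<exists>x. is_least_in r x"
  using ex_is_least_in_subalg[OF assms(1,2) coheyting_subalg_UNIV assms(3,4)] by blast

section \<open>Completely irreducible elements\<close>

lemma is_least_in_compl_join_irred:
  fixes r :: "'a::coheyting set"
  assumes H: "hausdorff TYPE('a)" and PC: "precompact TYPE('a)"
    and r: "prime_filter r" "height r = enat n" and x: "is_least_in r x"
  shows "x \<in> compl_join_irred"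
proof -
  obtain k where k: "is_greatest_outside r k"
    using ex_is_greatest_outside[OF H PC r] by blast
  have "x \<noteq> bot"
    using x prime_filter_bot[OF r(1)] unfolding is_least_in_def by blast
  moreover have "\<exists>a\<in>A. x \<le> a" if "is_lub A s" "x \<le> s" for A s
  proof (rule ccontr)
    assume "\<not> (\<exists>a\<in>A. x \<le> a)"
    then have "\<forall>a\<in>A. a \<le> k"
      using x k prime_filter_up[OF r(1)] unfolding is_least_in_def is_greatest_outside_def by blast
    then have "x \<le> k"
      using that order_trans unfolding is_lub_def by blast
    then show False
      using x k prime_filter_up[OF r(1)] unfolding is_least_in_def is_greatest_outside_def by blast
  qed
  ultimately show ?thesis unfolding compl_join_irred_def by blast
qed

lemma is_greatest_outside_compl_meet_irred:
  fixes r :: "'a::coheyting set"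
  assumes r: "prime_filter r" and x: "is_least_in r x" and k: "is_greatest_outside r k"
  shows "k \<in> compl_meet_irred"
proof -
  have "k \<noteq> top"
    using k prime_filter_top[OF r] unfolding is_greatest_outside_def by blast
  moreover have "\<exists>a\<in>A. a \<le> k" if "is_glb A g" "g \<le> k" for A g
  proof (rule ccontr)
    assume "\<not> (\<exists>a\<in>A. a \<le> k)"
    then have "\<forall>a\<in>A. x \<le> a"
      using x k unfolding is_least_in_def is_greatest_outside_def by blast
    then have "x \<le> k"
      using that order_trans unfolding is_glb_def by blast
    then show False
      using x k prime_filter_up[OF r] unfolding is_least_in_def is_greatest_outside_def by blast
  qed
  ultimately show ?thesis unfolding compl_meet_irred_def by blast
qed

lemma compl_join_irred_is_least_in:
  fixes x :: "'a::coheyting"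
  assumes H: "hausdorff TYPE('a)" and x: "x \<in> compl_join_irred"
  shows "\<exists>r n. prime_filter r \<and> height r = enat n \<and> is_least_in r x"
proof -
  have "x \<noteq> bot" and join_irred: "\<And>A s. is_lub A s \<Longrightarrow> x \<le> s \<Longrightarrow> \<exists>a\<in>A. x \<le> a"
    using x unfolding compl_join_irred_def by auto
  let ?r = "{a. x \<le> a}"
  have r: "prime_filter ?r"
    unfolding prime_filter_def
  proof (intro conjI allI impI)
    show "bot \<notin> ?r" using \<open>x \<noteq> bot\<close> bot_unique by blast
  next
    fix a b assume "sup a b \<in> ?r"
    moreover have "is_lub {a, b} (sup a b)" unfolding is_lub_def by simp
    ultimately show "a \<in> ?r \<or> b \<in> ?r" using join_irred by blast
  qed (auto intro: order_trans)
  obtain q where q: "prime_filter q" "x \<in> q" "height q \<noteq> \<infinity>"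
    using codim_attained[of x] H \<open>x \<noteq> bot\<close> unfolding hausdorff_def by fastforce
  obtain i where "height q = enat i" using q(3) by auto
  moreover have "height ?r \<le> height q"
    using height_mono[OF _ q(1), of ?r] prime_filter_up[OF q(1,2)] by blast
  ultimately obtain n where "height ?r = enat n" using enat_ile by metis
  moreover have "is_least_in ?r x" unfolding is_least_in_def by simp
  ultimately show ?thesis using r by blast
qed

lemma compl_meet_irred_is_greatest_outside:
  fixes c :: "'a::coheyting"
  assumes H: "hausdorff TYPE('a)" and PC: "precompact TYPE('a)" and c: "c \<in> compl_meet_irred"
  shows "\<exists>r n. prime_filter r \<and> height r = enat n \<and> is_greatest_outside r c"
proof -
  define A where "A = {k. \<exists>r n. prime_filter r \<and> height r = enat n \<and> c \<notin> r \<and> is_greatest_outside r k}"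
  have lower: "\<forall>k\<in>A. c \<le> k" unfolding A_def is_greatest_outside_def by blast
  have greatest: "u \<le> c" if u: "\<forall>k\<in>A. u \<le> k" for u
  proof (rule hausdorff_le_if_prime_filters[OF H])
    fix q assume q: "prime_filter q" "height q \<noteq> \<infinity>" "u \<in> q"
    show "c \<in> q"
    proof (rule ccontr)
      assume "c \<notin> q"
      obtain n where n: "height q = enat n" using q(2) by auto
      obtain k where k: "is_greatest_outside q k"
        using ex_is_greatest_outside[OF H PC q(1) n] by blast
      then have "k \<in> A" unfolding A_def using q(1) n \<open>c \<notin> q\<close> by blast
      then have "k \<in> q" using u prime_filter_up[OF q(1,3)] by blast
      then show False using k unfolding is_greatest_outside_def by blast
    qed
  qed
  have "is_glb A c" unfolding is_glb_def using lower greatest by blast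
  then obtain k where "k \<in> A" "k \<le> c"
    using c unfolding compl_meet_irred_def by blast
  moreover from this have "c = k" using lower by (blast intro: order.antisym)
  ultimately show ?thesis unfolding A_def by blast
qed

lemma compl_join_irred_subset_subalg:
  fixes S :: "'a::coheyting set"
  assumes H: "hausdorff TYPE('a)" and PC: "precompact TYPE('a)" and S: "coheyting_subalg S"
    and greatest_S: "\<And>q m k. prime_filter q \<Longrightarrow> height q = enat m \<Longrightarrow> is_greatest_outside q k \<Longrightarrow> k \<in> S"
  shows "compl_join_irred \<subseteq> S"
proof
  fix x :: 'a assume "x \<in> compl_join_irred"
  then obtain r n where r: "prime_filter r" "height r = enat n" and x: "is_least_in r x"
    using compl_join_irred_is_least_in[OF H] by blast
  have "\<exists>x'\<in>S. is_least_in r x'"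
    by (rule ex_is_least_in_subalg[OF H PC S r]) (rule greatest_S)
  then obtain x' where "x' \<in> S" "is_least_in r x'" by blast
  then show "x \<in> S" using is_least_in_unique[OF x] by blast
qed

lemma coheyting_subalg_gen_subalg: "coheyting_subalg (gen_subalg X)"
  unfolding gen_subalg_def coheyting_subalg_def by blast

lemma subset_gen_subalg: "X \<subseteq> gen_subalg X"
  unfolding gen_subalg_def by blast

lemma gen_subalg_least: "coheyting_subalg T \<Longrightarrow> X \<subseteq> T \<Longrightarrow> gen_subalg X \<subseteq> T"
  unfolding gen_subalg_def by blast

lemma ex_subalg_join_of_least:
  fixes R :: "'a::coheyting set set"
  assumes S: "coheyting_subalg S" and "finite R" and least: "\<And>r. r \<in> R \<Longrightarrow> \<exists>x\<in>S. is_least_in r x"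
  shows "\<exists>y\<in>S. \<forall>q. prime_filter q \<longrightarrow> (y \<in> q \<longleftrightarrow> (\<exists>r\<in>R. r \<subseteq> q))"
  using assms(2,3)
proof (induction R rule: finite_induct)
  case empty
  then show ?case using S prime_filter_bot unfolding coheyting_subalg_def by blast
next
  case (insert r R)
  then obtain y where y: "y \<in> S" "\<forall>q. prime_filter q \<longrightarrow> (y \<in> q \<longleftrightarrow> (\<exists>r\<in>R. r \<subseteq> q))"
    by blast
  obtain x where x: "x \<in> S" "is_least_in r x" using insert.prems by blast
  have "sup y x \<in> S" using S y(1) x(1) unfolding coheyting_subalg_def by blast
  moreover have "sup y x \<in> q \<longleftrightarrow> (\<exists>r'\<in>insert r R. r' \<subseteq> q)" if q: "prime_filter q" for q
  proof -
    have "sup y x \<in> q \<longleftrightarrow> y \<in> q \<or> x \<in> q"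
      by (rule prime_filter_sup_iff[OF q])
    also have "\<dots> \<longleftrightarrow> (\<exists>r'\<in>R. r' \<subseteq> q) \<or> r \<subseteq> q"
      using y(2) is_least_in_mem_iff[OF x(2) q] q by simp
    finally show ?thesis by blast
  qed
  ultimately show ?case by blast
qed

lemma codim_dense_gen_subalg_compl_join_irred:
  assumes H: "hausdorff TYPE('a::coheyting)" and PC: "precompact TYPE('a)"
  shows "codim_dense (gen_subalg (compl_join_irred :: 'a set))"
  unfolding codim_dense_iff_agree_below
proof (intro allI)
  fix a :: 'a and k
  let ?R = "{r. prime_filter r \<and> height r < enat k \<and> a \<in> r}"
  have "finite ?R"
    using finite_prime_filters_height_less[OF PC, of k] by (rule finite_subset[rotated]) blast
  have least: "\<exists>x\<in>gen_subalg compl_join_irred. is_least_in r x" if "r \<in> ?R" for r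
  proof -
    have "prime_filter r" "height r < enat k"
      using that by auto
    then obtain n where r: "prime_filter r" "height r = enat n"
      using enat_iless by blast
    then obtain x where "is_least_in r x"
      using ex_is_least_in[OF H PC] by blast
    then show ?thesis
      using is_least_in_compl_join_irred[OF H PC r] subset_gen_subalg by blast
  qed
  have "\<exists>y\<in>gen_subalg compl_join_irred. \<forall>q. prime_filter q \<longrightarrow> (y \<in> q \<longleftrightarrow> (\<exists>r\<in>?R. r \<subseteq> q))"
    by (rule ex_subalg_join_of_least[OF coheyting_subalg_gen_subalg \<open>finite ?R\<close>]) (rule least)
  then obtain y where "y \<in> gen_subalg compl_join_irred"
      and y: "\<And>q. prime_filter q \<Longrightarrow> y \<in> q \<longleftrightarrow> (\<exists>r\<in>?R. r \<subseteq> q)"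
    by blast
  moreover have "agree_below k a y"
    unfolding agree_below_def
  proof (intro allI impI)
    fix q :: "'a set" assume q: "prime_filter q \<and> height q < enat k"
    show "a \<in> q \<longleftrightarrow> y \<in> q"
    proof
      assume "a \<in> q"
      then have "q \<in> ?R" using q by blast
      then show "y \<in> q" using y q by blast
    next
      assume "y \<in> q"
      then obtain r where "r \<in> ?R" "r \<subseteq> q" using y q by blast
      then show "a \<in> q" by blast
    qed
  qed
  ultimately show "\<exists>t\<in>gen_subalg compl_join_irred. agree_below k a t" by blast
qed

lemma compl_meet_irred_subset_dense:
  fixes T :: "'a::coheyting set"
  assumes H: "hausdorff TYPE('a)" and PC: "precompact TYPE('a)" and "codim_dense T"
  shows "compl_meet_irred \<subseteq> T"
  using compl_meet_irred_is_greatest_outside[OF H PC] is_greatest_outside_mem_dense[OF H assms(3)]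
  by blast

lemma compl_join_irred_subset_dense:
  fixes T :: "'a::coheyting set"
  assumes H: "hausdorff TYPE('a)" and PC: "precompact TYPE('a)"
    and "coheyting_subalg T" "codim_dense T"
  shows "compl_join_irred \<subseteq> T"
  using compl_join_irred_subset_subalg[OF H PC assms(3)] is_greatest_outside_mem_dense[OF H assms(4)]
  by blast

lemma compl_join_irred_subset_gen_subalg_compl_meet_irred:
  assumes H: "hausdorff TYPE('a::coheyting)" and PC: "precompact TYPE('a)"
  shows "compl_join_irred \<subseteq> gen_subalg (compl_meet_irred :: 'a set)"
proof (rule compl_join_irred_subset_subalg[OF H PC coheyting_subalg_gen_subalg])
  fix q :: "'a set" and m k
  assume q: "prime_filter q" "height q = enat m" and k: "is_greatest_outside q k"
  obtain x where "is_least_in q x" using ex_is_least_in[OF H PC q] by blast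
  then show "k \<in> gen_subalg compl_meet_irred"
    using is_greatest_outside_compl_meet_irred[OF q(1) _ k] subset_gen_subalg by blast
qed

theorem proposition6p12:
  assumes "precompact TYPE('a::coheyting)" and "hausdorff TYPE('a)"
  shows "gen_subalg (compl_join_irred :: 'a set) = gen_subalg compl_meet_irred
       \<and> coheyting_subalg (gen_subalg (compl_join_irred :: 'a set))
       \<and> codim_dense (gen_subalg (compl_join_irred :: 'a set))
       \<and> (\<forall>T::'a set. coheyting_subalg T \<and> codim_dense T
              \<longrightarrow> gen_subalg compl_join_irred \<subseteq> T)"
proof -
  note PC = assms(1) and H = assms(2)
  let ?G = "gen_subalg (compl_join_irred :: 'a set)"
  let ?M = "gen_subalg (compl_meet_irred :: 'a set)"
  have dense: "codim_dense ?G"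
    using codim_dense_gen_subalg_compl_join_irred[OF H PC] .
  have "?G \<subseteq> ?M"
    using gen_subalg_least[OF coheyting_subalg_gen_subalg]
      compl_join_irred_subset_gen_subalg_compl_meet_irred[OF H PC] .
  moreover have "?M \<subseteq> ?G"
    using gen_subalg_least[OF coheyting_subalg_gen_subalg]
      compl_meet_irred_subset_dense[OF H PC dense] .
  moreover have "?G \<subseteq> T" if "coheyting_subalg T" "codim_dense T" for T
    using gen_subalg_least[OF that(1)] compl_join_irred_subset_dense[OF H PC that] .
  ultimately show ?thesis
    using coheyting_subalg_gen_subalg dense by blast
qed

end
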